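(* The quantum group $\mathbb{G}=\widehat{S_3}$ does not admit any central quantum Cayley graph $A$ such that $\mathbb{G}=\operatorname{Qut}(C(\mathbb{G}),A)$; that is, for no central orthogonal projection $P\in\mathbb{C}[S_3]$ does the quantum Cayley graph $A=P\star(\cdot)$ satisfy $\operatorname{Qut}(C(\mathbb{G}),A)=\mathbb{G}$.
   Context: $\widehat{S_3}$ is the finite quantum group with $C(\widehat{S_3})=\mathbb{C}[S_3]$, $\Delta(\lambda_g)=\lambda_g\otimes\lambda_g$, $S(\lambda_g)=\lambda_{g^{-1}}$; $\psi$ is its Haar functional normalized to be the tracial 1-form (tracial positive functional with $mm^*=\mathrm{id}$ for $\langle x,y\rangle=\psi(x^*y)$). Convolution: $x\star y=(\psi(S(x)\,\cdot)\otimes\mathrm{id})\Delta(y)$. For a quantum adjacency matrix $A$ (with $A\bullet A=A=\bar A$, $A\bullet B=m(A\otimes B)m^*$, $\bar Af=(A(f^* ))^*$), $\operatorname{Qut}(C(\mathbb{G}),A)$ is the universal compact quantum group with a $\psi$-preserving action $\alpha$ on $C(\mathbb{G})$ satisfying $(A\otimes\mathrm{id})\alpha=\alpha A$; $\mathbb{G}$ acts on it via $\Delta$, and equality means that the induced surjection of Hopf $*$-algebras is an isomorphism. *)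

theory Defs
  imports Complex_Main "HOL-Library.Numeral_Type" "HOL-Combinatorics.Perm"
begin

text \<open>S3 is the group of permutations of the three-element type 3.
  An element x of C[S3] is given by its coefficient function, x = sum_g (x g) lambda_g.\<close>

type_synonym grp = "3 perm"
type_synonym gal = "grp \<Rightarrow> complex"

definition lam :: "grp \<Rightarrow> gal" where
  "lam g = (\<lambda>h. if h = g then 1 else 0)"

definition gmult :: "gal \<Rightarrow> gal \<Rightarrow> gal" where
  "gmult x y = (\<lambda>k. \<Sum>g\<in>UNIV. \<Sum>h\<in>UNIV. if g * h = k then x g * y h else 0)"

definition gstar :: "gal \<Rightarrow> gal" where
  "gstar x = (\<lambda>g. cnj (x (inverse g)))"

definition antipode :: "gal \<Rightarrow> gal" where
  "antipode x = (\<lambda>g. x (inverse g))"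

text \<open>comultiplication Delta(lambda_g) = lambda_g (x) lambda_g; elements of C[S3] (x) C[S3]
  are coefficient functions on grp \<times> grp.\<close>
definition comult :: "gal \<Rightarrow> (grp \<times> grp \<Rightarrow> complex)" where
  "comult x = (\<lambda>(g, h). if g = h then x g else 0)"

text \<open>Haar functional normalised as the tracial delta-form (m m^* = id): psi(lambda_g) = 6 [g = 1].\<close>
definition psi :: "gal \<Rightarrow> complex" where
  "psi x = 6 * x 1"

text \<open>convolution x \<star> y = (psi(S(x) .) (x) id) Delta(y)\<close>
definition conv :: "gal \<Rightarrow> gal \<Rightarrow> gal" where
  "conv x y = (\<lambda>h. \<Sum>g\<in>UNIV. psi (gmult (antipode x) (lam g)) * comult y (g, h))"

definition central_orth_proj :: "gal \<Rightarrow> bool" where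
  "central_orth_proj P \<longleftrightarrow> gstar P = P \<and> gmult P P = P \<and> (\<forall>x. gmult P x = gmult x P)"

definition cayley :: "gal \<Rightarrow> (gal \<Rightarrow> gal)" where
  "cayley P = conv P"

datatype expr = U grp grp | C complex | Plus expr expr | Times expr expr | Star expr

text \<open>the smallest congruence making expr/eqv R a unital complex *-algebra in which R holds\<close>
inductive eqv :: "(expr \<Rightarrow> expr \<Rightarrow> bool) \<Rightarrow> expr \<Rightarrow> expr \<Rightarrow> bool" for R where
  rel: "R a b \<Longrightarrow> eqv R a b"
| refl: "eqv R a a"
| sym: "eqv R a b \<Longrightarrow> eqv R b a"
| trans: "eqv R a b \<Longrightarrow> eqv R b c \<Longrightarrow> eqv R a c"
| cong_plus: "eqv R a a' \<Longrightarrow> eqv R b b' \<Longrightarrow> eqv R (Plus a b) (Plus a' b')"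
| cong_times: "eqv R a a' \<Longrightarrow> eqv R b b' \<Longrightarrow> eqv R (Times a b) (Times a' b')"
| cong_star: "eqv R a a' \<Longrightarrow> eqv R (Star a) (Star a')"
| plus_assoc: "eqv R (Plus (Plus a b) c) (Plus a (Plus b c))"
| plus_comm: "eqv R (Plus a b) (Plus b a)"
| plus_zero: "eqv R (Plus a (C 0)) a"
| times_assoc: "eqv R (Times (Times a b) c) (Times a (Times b c))"
| times_one_left: "eqv R (Times (C 1) a) a"
| times_one_right: "eqv R (Times a (C 1)) a"
| times_zero: "eqv R (Times (C 0) a) (C 0)"
| distrib_left: "eqv R (Times a (Plus b c)) (Plus (Times a b) (Times a c))"
| distrib_right: "eqv R (Times (Plus a b) c) (Plus (Times a c) (Times b c))"
| const_plus: "eqv R (Plus (C x) (C y)) (C (x + y))"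
| const_times: "eqv R (Times (C x) (C y)) (C (x * y))"
| const_central: "eqv R (Times (C x) a) (Times a (C x))"
| star_plus: "eqv R (Star (Plus a b)) (Plus (Star a) (Star b))"
| star_times: "eqv R (Star (Times a b)) (Times (Star b) (Star a))"
| star_const: "eqv R (Star (C x)) (C (cnj x))"
| star_star: "eqv R (Star (Star a)) a"

definition grps :: "grp list" where
  "grps = (SOME xs. distinct xs \<and> set xs = UNIV)"

definition esum :: "(grp \<Rightarrow> expr) \<Rightarrow> expr" where
  "esum f = foldr (\<lambda>g e. Plus (f g) e) grps (C 0)"

definition kron :: "grp \<Rightarrow> grp \<Rightarrow> expr" where
  "kron i j = (if i = j then C 1 else C 0)"

text \<open>Elements of C[S3] (x) O are coefficient functions grp \<Rightarrow> expr (coefficient of lambda_g).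
  The action: alpha(lambda_i) = sum_j lambda_j (x) u_ji.\<close>
definition alpha :: "gal \<Rightarrow> grp \<Rightarrow> expr" where
  "alpha x = (\<lambda>j. esum (\<lambda>i. Times (C (x i)) (U j i)))"

definition tmult :: "(grp \<Rightarrow> expr) \<Rightarrow> (grp \<Rightarrow> expr) \<Rightarrow> grp \<Rightarrow> expr" where
  "tmult F G = (\<lambda>k. esum (\<lambda>g. esum (\<lambda>h. if g * h = k then Times (F g) (G h) else C 0)))"

definition tstar :: "(grp \<Rightarrow> expr) \<Rightarrow> grp \<Rightarrow> expr" where
  "tstar F = (\<lambda>g. Star (F (inverse g)))"

definition tunit :: "grp \<Rightarrow> expr" where
  "tunit = (\<lambda>g. if g = 1 then C 1 else C 0)"

text \<open>(T (x) id) applied to an element of C[S3] (x) O, for a linear map T on C[S3]\<close>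
definition tmap :: "(gal \<Rightarrow> gal) \<Rightarrow> (grp \<Rightarrow> expr) \<Rightarrow> grp \<Rightarrow> expr" where
  "tmap T F = (\<lambda>k. esum (\<lambda>g. Times (C (T (lam g) k)) (F g)))"

definition tpsi :: "(grp \<Rightarrow> expr) \<Rightarrow> expr" where
  "tpsi F = esum (\<lambda>g. Times (C (psi (lam g))) (F g))"

text \<open>Defining relations of Qut(C(G), A): u unitary (the basis lambda_g/sqrt 6 is orthonormal
  for <x,y> = psi(x^* y)), alpha a unital *-homomorphism, psi-preserving, and
  (A (x) id) alpha = alpha A.\<close>
inductive qut_rel :: "(gal \<Rightarrow> gal) \<Rightarrow> expr \<Rightarrow> expr \<Rightarrow> bool" for A where
  unitary1: "qut_rel A (esum (\<lambda>k. Times (Star (U k i)) (U k j))) (kron i j)"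
| unitary2: "qut_rel A (esum (\<lambda>k. Times (U i k) (Star (U j k)))) (kron i j)"
| mult: "qut_rel A (alpha (gmult x y) k) (tmult (alpha x) (alpha y) k)"
| star: "qut_rel A (alpha (gstar x) k) (tstar (alpha x) k)"
| unit: "qut_rel A (alpha (lam 1) k) (tunit k)"
| psi_pres: "qut_rel A (tpsi (alpha x)) (C (psi x))"
| adj: "qut_rel A (tmap A (alpha x) k) (alpha (A x) k)"

text \<open>The surjection O(Qut) \<rightarrow> C[S3] induced by the action Delta of G on C(G):
  Delta(lambda_i) = lambda_i (x) lambda_i, i.e. u_ji \<mapsto> [j = i] lambda_i.\<close>
fun evalG :: "expr \<Rightarrow> gal" where
  "evalG (U j i) = (if j = i then lam i else (\<lambda>_. 0))"
| "evalG (C c) = (\<lambda>g. if g = 1 then c else 0)"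
| "evalG (Plus a b) = (\<lambda>g. evalG a g + evalG b g)"
| "evalG (Times a b) = gmult (evalG a) (evalG b)"
| "evalG (Star a) = gstar (evalG a)"

text \<open>G = Qut(C(G), A): the induced map O(Qut) = expr/eqv \<rightarrow> C[S3] is well defined and bijective
  (it is surjective by construction), i.e. its kernel is exactly the relation ideal.\<close>
definition qut_equals_G :: "(gal \<Rightarrow> gal) \<Rightarrow> bool" where
  "qut_equals_G A \<longleftrightarrow> (\<forall>a b. eqv (qut_rel A) a b \<longleftrightarrow> evalG a = evalG b)"

end

theory Submission
  imports Defs
begin

text \<open>Conjugation by a transposition is a non-trivial automorphism \<open>\<phi>\<close> of \<open>S\<^sub>3\<close> leaving every
  class function, in particular every central \<open>P\<close>, invariant (only centrality of \<open>P\<close> is used).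
  The automorphism of \<open>\<complex>[S\<^sub>3]\<close> it induces preserves \<open>\<psi>\<close> and commutes with \<open>A = P \<star> (\<cdot>)\<close>,
  which is pointwise multiplication of coefficients by \<open>6 P\<close>. Hence it is a classical point of
  \<open>Qut(C(G), A)\<close>: a character of the universal algebra sending \<open>u\<^sub>j\<^sub>i\<close> to \<open>[\<phi> j = i]\<close>.
  The map onto \<open>\<complex>[S\<^sub>3]\<close> kills \<open>u\<^sub>j\<^sub>i\<close> for \<open>j \<noteq> i\<close>, whereas the character does not
  whenever \<open>\<phi> j \<noteq> j\<close>, so that map is not injective.\<close>

lemma finite_grp: "finite (UNIV :: grp set)"
proof -
  have "inj (Perm.apply :: grp \<Rightarrow> 3 \<Rightarrow> 3)"
    by (simp add: inj_def apply_inject)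
  then show ?thesis
    using finite_imageD[of "Perm.apply :: grp \<Rightarrow> 3 \<Rightarrow> 3" UNIV] by simp
qed

lemma grps_enumerates_grp: "distinct grps" "set grps = UNIV"
proof -
  obtain xs :: "grp list" where "distinct xs \<and> set xs = UNIV"
    using finite_distinct_list[OF finite_grp] by metis
  then have "distinct grps \<and> set grps = UNIV"
    unfolding grps_def by (rule someI)
  then show "distinct grps" "set grps = UNIV" by simp_all
qed

lemma mult_eq_iff_right: "(a::grp) * g = k \<longleftrightarrow> a = k * inverse g"
  by (metis mult.assoc mult_1_right perm.right_inverse perm.left_inverse)

lemma mult_eq_iff_left: "(g::grp) * b = k \<longleftrightarrow> b = inverse g * k"
  by (metis mult.assoc mult_1_left perm.right_inverse perm.left_inverse)

lemma gmult_lam_right: "gmult x (lam g) k = x (k * inverse g)"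
proof -
  have "gmult x (lam g) k
      = (\<Sum>a\<in>UNIV. \<Sum>b\<in>UNIV. if b = g then (if a * g = k then x a else 0) else 0)"
    unfolding gmult_def lam_def by (intro sum.cong HOL.refl) auto
  also have "\<dots> = (\<Sum>a\<in>UNIV. if a = k * inverse g then x a else 0)"
    by (simp add: finite_grp mult_eq_iff_right)
  finally show ?thesis by (simp add: finite_grp)
qed

lemma gmult_lam_left: "gmult (lam g) x k = x (inverse g * k)"
proof -
  have "gmult (lam g) x k
      = (\<Sum>a\<in>UNIV. if a = g then (\<Sum>b\<in>UNIV. if b = inverse g * k then x b else 0) else 0)"
    unfolding gmult_def lam_def
  proof (intro sum.cong HOL.refl)
    fix a :: grp
    show "(\<Sum>h\<in>UNIV. if a * h = k then (if a = g then 1 else 0) * x h else 0)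
        = (if a = g then \<Sum>b\<in>UNIV. if b = inverse g * k then x b else 0 else 0)"
      by (cases "a = g") (simp_all add: mult_eq_iff_left cong: if_cong)
  qed
  then show ?thesis by (simp add: finite_grp)
qed

lemma central_imp_conj_invariant:
  assumes "\<forall>x. gmult P x = gmult x P"
  shows "P (\<sigma> * g * inverse \<sigma>) = P g"
  using assms gmult_lam_right[of P \<sigma> "\<sigma> * g"] gmult_lam_left[of \<sigma> P "\<sigma> * g"]
  by (simp flip: mult.assoc)

lemma cayley_apply: "cayley P y h = 6 * P h * y h"
proof -
  have "cayley P y h = psi (gmult (antipode P) (lam h)) * y h"
    unfolding cayley_def conv_def comult_def
    by (simp add: finite_grp if_distrib[of "\<lambda>c. _ * c"] cong: if_cong)
  then show ?thesis
    by (simp add: psi_def gmult_lam_right antipode_def)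
qed

text \<open>Along this character the action \<open>alpha\<close> specialises to \<open>\<lambda>\<^sub>i \<mapsto> \<lambda>\<^bsub>\<phi>\<^sup>-\<^sup>1 i\<^esub>\<close>.\<close>

fun aut_char :: "(grp \<Rightarrow> grp) \<Rightarrow> expr \<Rightarrow> complex" where
  "aut_char \<phi> (U j i) = (if \<phi> j = i then 1 else 0)"
| "aut_char \<phi> (C c) = c"
| "aut_char \<phi> (Plus a b) = aut_char \<phi> a + aut_char \<phi> b"
| "aut_char \<phi> (Times a b) = aut_char \<phi> a * aut_char \<phi> b"
| "aut_char \<phi> (Star a) = cnj (aut_char \<phi> a)"

lemma aut_char_esum: "aut_char \<phi> (esum f) = (\<Sum>g\<in>UNIV. aut_char \<phi> (f g))"
proof -
  have "aut_char \<phi> (foldr (\<lambda>g e. Plus (f g) e) xs (C 0)) = (\<Sum>g\<leftarrow>xs. aut_char \<phi> (f g))" for xs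
    by (induction xs) simp_all
  then show ?thesis
    unfolding esum_def using grps_enumerates_grp by (simp add: sum_list_distinct_conv_sum_set)
qed

lemma aut_char_alpha: "aut_char \<phi> (alpha x j) = x (\<phi> j)"
  unfolding alpha_def aut_char_esum by (simp add: finite_grp if_distrib cong: if_cong)

locale grp_automorphism =
  fixes \<phi> :: "grp \<Rightarrow> grp"
  assumes bij: "bij \<phi>"
    and hom_mult: "\<phi> (g * h) = \<phi> g * \<phi> h"
begin

lemma hom_eq_iff: "\<phi> g = \<phi> h \<longleftrightarrow> g = h"
  using bij by (simp add: bij_def inj_eq)

lemma hom_one: "\<phi> 1 = 1"
  using hom_mult[of 1 1] by (metis mult_1_right perm.left_cancel)

lemma hom_eq_one_iff: "\<phi> g = 1 \<longleftrightarrow> g = 1"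
  by (metis hom_eq_iff hom_one)

lemma hom_inverse: "\<phi> (inverse g) = inverse (\<phi> g)"
  using hom_mult[of g "inverse g"] hom_one by (metis perm.inverse_unique perm.right_inverse)

lemma sum_reindex: "(\<Sum>g\<in>UNIV. F (\<phi> g)) = (\<Sum>g\<in>UNIV. F g)"
  using bij by (simp add: sum.reindex_bij_betw)

lemma aut_char_tmult:
  "aut_char \<phi> (tmult (alpha x) (alpha y) k) = gmult x y (\<phi> k)"
proof -
  let ?F = "\<lambda>a b. if a * b = \<phi> k then x a * y b else 0"
  have "aut_char \<phi> (tmult (alpha x) (alpha y) k) = (\<Sum>g\<in>UNIV. \<Sum>h\<in>UNIV. ?F (\<phi> g) (\<phi> h))"
    unfolding tmult_def aut_char_esum
    by (intro sum.cong HOL.refl) (simp add: aut_char_alpha hom_eq_iff flip: hom_mult)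
  also have "\<dots> = (\<Sum>g\<in>UNIV. \<Sum>h\<in>UNIV. ?F g h)"
    by (simp add: sum_reindex[of "\<lambda>a. \<Sum>h\<in>UNIV. ?F a h"] sum_reindex[of "?F _"])
  finally show ?thesis by (simp add: gmult_def)
qed

lemma aut_char_respects_qut_rel:
  assumes invariant: "\<And>g. P (\<phi> g) = P g"
  shows "qut_rel (cayley P) a b \<Longrightarrow> aut_char \<phi> a = aut_char \<phi> b"
proof (induction rule: qut_rel.induct)
  case (unitary1 i j)
  have "(\<Sum>k\<in>UNIV. aut_char \<phi> (Times (Star (U k i)) (U k j)))
      = (\<Sum>k\<in>UNIV. if \<phi> k = i then (if i = j then 1 else 0) else 0)"
    by (intro sum.cong HOL.refl) auto
  also have "\<dots> = (\<Sum>k\<in>UNIV. if k = i then (if i = j then 1 else 0) else 0)"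
    by (rule sum_reindex)
  finally show ?case by (simp add: aut_char_esum kron_def finite_grp)
next
  case (unitary2 i j)
  have "(\<Sum>k\<in>UNIV. aut_char \<phi> (Times (U i k) (Star (U j k))))
      = (\<Sum>k\<in>UNIV. if k = \<phi> i then (if i = j then 1 else 0) else 0)"
    by (intro sum.cong HOL.refl) (auto simp: hom_eq_iff)
  then show ?case by (simp add: aut_char_esum kron_def finite_grp)
next
  case (mult x y k)
  then show ?case by (simp add: aut_char_alpha aut_char_tmult)
next
  case (star x k)
  then show ?case by (simp add: aut_char_alpha tstar_def gstar_def hom_inverse)
next
  case (unit k)
  then show ?case by (simp add: aut_char_alpha tunit_def lam_def hom_eq_one_iff)
next
  case (psi_pres x)
  have "(\<Sum>g\<in>UNIV. aut_char \<phi> (Times (C (psi (lam g))) (alpha x g)))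
      = (\<Sum>g\<in>UNIV. if g = (1::grp) then 6 * x 1 else 0)"
    by (intro sum.cong HOL.refl) (auto simp: aut_char_alpha psi_def lam_def hom_one)
  then show ?case by (simp add: tpsi_def aut_char_esum psi_def finite_grp)
next
  case (adj x k)
  have "(\<Sum>g\<in>UNIV. aut_char \<phi> (Times (C (cayley P (lam g) k)) (alpha x g)))
      = (\<Sum>g\<in>UNIV. if g = k then 6 * P k * x (\<phi> k) else 0)"
    by (intro sum.cong HOL.refl) (auto simp: aut_char_alpha cayley_apply lam_def)
  then show ?case
    by (simp add: tmap_def aut_char_esum aut_char_alpha cayley_apply invariant finite_grp)
qed

lemma aut_char_respects_eqv:
  assumes "\<And>g. P (\<phi> g) = P g"
  shows "eqv (qut_rel (cayley P)) a b \<Longrightarrow> aut_char \<phi> a = aut_char \<phi> b"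
  by (induction rule: eqv.induct)
     (auto simp: aut_char_respects_qut_rel[where P = P, OF assms] algebra_simps)

lemma not_qut_equals_G_if_invariant:
  assumes invariant: "\<And>g. P (\<phi> g) = P g" and moved: "\<phi> j \<noteq> j"
  shows "\<not> qut_equals_G (cayley P)"
proof
  assume "qut_equals_G (cayley P)"
  moreover have "evalG (U j (\<phi> j)) = evalG (C 0)"
    using moved by auto
  ultimately have "eqv (qut_rel (cayley P)) (U j (\<phi> j)) (C 0)"
    unfolding qut_equals_G_def by blast
  then have "aut_char \<phi> (U j (\<phi> j)) = aut_char \<phi> (C 0)"
    by (rule aut_char_respects_eqv[where P = P, OF invariant])
  then show False by simp
qed

end

lemma grp_automorphism_conj: "grp_automorphism (\<lambda>g. \<sigma> * g * inverse \<sigma>)"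
proof -
  have cancel: "inverse \<sigma> * (\<sigma> * g) = g" "\<sigma> * (inverse \<sigma> * g) = g" for g :: grp
    by (simp_all flip: mult.assoc)
  have "bij (\<lambda>g. \<sigma> * g * inverse \<sigma>)"
    by (rule o_bij[where g = "\<lambda>g. inverse \<sigma> * g * \<sigma>"])
       (simp_all add: fun_eq_iff mult.assoc cancel)
  then show ?thesis
    by unfold_locales (simp_all add: mult.assoc cancel)
qed

theorem proposition6p10:
  shows "\<not> (\<exists>P. central_orth_proj P \<and> qut_equals_G (cayley P))"
proof
  assume "\<exists>P. central_orth_proj P \<and> qut_equals_G (cayley P)"
  then obtain P where central: "central_orth_proj P" and equal: "qut_equals_G (cayley P)"
    by blast
  define \<sigma> :: grp where "\<sigma> = Perm.swap 0 1"
  interpret grp_automorphism "\<lambda>g. \<sigma> * g * inverse \<sigma>"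
    by (rule grp_automorphism_conj)
  have "P (\<sigma> * g * inverse \<sigma>) = P g" for g
    using central central_imp_conj_invariant unfolding central_orth_proj_def by blast
  moreover have "\<sigma> * Perm.swap 1 2 * inverse \<sigma> \<noteq> Perm.swap 1 2"
  proof
    assume "\<sigma> * Perm.swap 1 2 * inverse \<sigma> = Perm.swap 1 2"
    then have "Perm.apply (\<sigma> * Perm.swap 1 2 * inverse \<sigma>) 1 = Perm.apply (Perm.swap 1 2) 1"
      by simp
    then show False
      unfolding \<sigma>_def by (simp add: apply_times)
  qed
  ultimately show False
    using equal not_qut_equals_G_if_invariant by blast
qed

end
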